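(* Let $H$ be a subgroup of index $m$ in a group $G$, and let $M$ be a free $\mathbb ZH$-module of rank at most $m$. Then $M\rtimes H$ embeds as a subgroup of the wreath product $\mathbb Z\wr G$.
   Context: $H$ acts on the free $\mathbb ZH$-module $M$ by left multiplication, and $M\rtimes H$ is $M\times H$ with $(m,h)(m',h')=(m+hm',hh')$. The (restricted) wreath product $\mathbb Z\wr G$ is the semidirect product $\mathbb ZG\rtimes G$, with $G$ acting on the group ring $\mathbb ZG$ by left multiplication. *)

theory Defs
  imports "HOL-Algebra.Algebra"
begin

text \<open>The (restricted) wreath product Z wr G = ZG x| G. An element of the group ring ZG
  is a finitely supported function carrier G -> int (the coefficient function),
  G acts on ZG by left multiplication: (g . a)(x) = a(g^-1 x).\<close>

definition wreath_Z :: "('g, 'b) monoid_scheme \<Rightarrow> (('g \<Rightarrow> int) \<times> 'g) monoid" where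
  "wreath_Z G = \<lparr>
     carrier = {(a, g). g \<in> carrier G \<and> finite {x. a x \<noteq> 0}
                        \<and> (\<forall>x. x \<notin> carrier G \<longrightarrow> a x = 0)},
     Group.monoid.mult = (\<lambda>(a, g) (b, g').
              (\<lambda>x. if x \<in> carrier G then a x + b (inv\<^bsub>G\<^esub> g \<otimes>\<^bsub>G\<^esub> x) else 0,
               g \<otimes>\<^bsub>G\<^esub> g')),
     one = (\<lambda>x. 0, \<one>\<^bsub>G\<^esub>) \<rparr>"

text \<open>The free ZH-module with basis indexed by the set I, i.e. the direct sum of copies of
  ZH indexed by I, realised as finitely supported functions I x H -> int
  (the coefficient of basis element i at group element k). H acts by left multiplication:
  (h . f)(i, k) = f(i, h^-1 k). free_semidirect G H I is the semidirect product M x| H.\<close>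

definition free_semidirect ::
  "('g, 'b) monoid_scheme \<Rightarrow> 'g set \<Rightarrow> 'i set \<Rightarrow> (('i \<times> 'g \<Rightarrow> int) \<times> 'g) monoid" where
  "free_semidirect G H I = \<lparr>
     carrier = {(f, h). h \<in> H \<and> finite {p. f p \<noteq> 0}
                        \<and> (\<forall>i k. \<not> (i \<in> I \<and> k \<in> H) \<longrightarrow> f (i, k) = 0)},
     Group.monoid.mult = (\<lambda>(f, h) (f', h').
              (\<lambda>(i, k). if i \<in> I \<and> k \<in> H then f (i, k) + f' (i, inv\<^bsub>G\<^esub> h \<otimes>\<^bsub>G\<^esub> k) else 0,
               h \<otimes>\<^bsub>G\<^esub> h')),
     one = (\<lambda>p. 0, \<one>\<^bsub>G\<^esub>) \<rparr>"

end

theory Submission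
  imports Defs
begin

text \<open>Since \<open>|I| \<le> [G : H]\<close>, one can pick \<open>r i \<in> G\<close> (\<open>i \<in> I\<close>) lying in pairwise distinct right
  cosets \<open>H r i\<close>. The \<open>\<int>H\<close>-linear map \<open>M \<rightarrow> \<int>G\<close> sending the basis element \<open>e\<^sub>i\<close> to \<open>r i\<close>
  sends \<open>k e\<^sub>i\<close> (\<open>k \<in> H\<close>) to \<open>k r i\<close>; as the cosets \<open>H r i\<close> are disjoint, these group elements are
  pairwise distinct, so the map is injective. Being \<open>H\<close>-equivariant, it extends by the identity
  on \<open>H\<close> to an injective homomorphism \<open>M \<rtimes> H \<rightarrow> \<int>G \<rtimes> G\<close>.\<close>

lemma (in group) subgroup_left_mult_iff:
  assumes H: "subgroup H G" and h: "h \<in> H" and y: "y \<in> carrier G"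
  shows "h \<otimes> y \<in> H \<longleftrightarrow> y \<in> H"
proof
  have hG: "h \<in> carrier G"
    using subgroup.mem_carrier [OF H h] .
  assume "h \<otimes> y \<in> H"
  then have "inv h \<otimes> (h \<otimes> y) \<in> H"
    by (rule subgroup.m_closed [OF H subgroup.m_inv_closed [OF H h]])
  moreover have "inv h \<otimes> (h \<otimes> y) = y"
    using hG y by (simp add: inv_solve_left')
  ultimately show "y \<in> H"
    by simp
next
  assume "y \<in> H"
  then show "h \<otimes> y \<in> H"
    by (rule subgroup.m_closed [OF H h])
qed

lemma (in group) rcos_left_mult_iff:
  assumes H: "subgroup H G" and h: "h \<in> H" and x: "x \<in> carrier G" and g: "g \<in> carrier G"
  shows "h \<otimes> x \<in> H #> g \<longleftrightarrow> x \<in> H #> g"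
proof -
  have hG: "h \<in> carrier G"
    using subgroup.mem_carrier [OF H h] .
  have "h \<otimes> x \<in> H #> g \<longleftrightarrow> h \<otimes> x \<otimes> inv g \<in> H"
    using subgroup.rcos_module [OF H is_group g m_closed [OF hG x]] .
  also have "h \<otimes> x \<otimes> inv g = h \<otimes> (x \<otimes> inv g)"
    using m_assoc [OF hG x inv_closed [OF g]] .
  also have "h \<otimes> (x \<otimes> inv g) \<in> H \<longleftrightarrow> x \<otimes> inv g \<in> H"
    using subgroup_left_mult_iff [OF H h m_closed [OF x inv_closed [OF g]]] .
  also have "\<dots> \<longleftrightarrow> x \<in> H #> g"
    using subgroup.rcos_module [OF H is_group g x] by (rule sym)
  finally show ?thesis .
qed

lemma (in group) exists_coset_transversal:
  assumes "finite (rcosets H)" and "finite I" and "card I \<le> card (rcosets H)"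
  shows "\<exists>r. r ` I \<subseteq> carrier G \<and> inj_on (\<lambda>i. H #> r i) I"
proof -
  obtain c where c: "c ` I \<subseteq> rcosets H" "inj_on c I"
    using card_le_inj [OF assms(2,1,3)] by blast
  then have "\<forall>i\<in>I. \<exists>g. g \<in> carrier G \<and> c i = H #> g"
    unfolding RCOSETS_def by blast
  then obtain r where r: "\<forall>i\<in>I. r i \<in> carrier G \<and> c i = H #> r i"
    by metis
  have "inj_on (\<lambda>i. H #> r i) I"
    using c(2) r by (simp add: inj_on_def)
  with r show ?thesis
    by blast
qed

definition coset_embed ::
    "('g, 'b) monoid_scheme \<Rightarrow> 'g set \<Rightarrow> 'i set \<Rightarrow> ('i \<Rightarrow> 'g) \<Rightarrow> ('i \<times> 'g \<Rightarrow> int) \<Rightarrow> 'g \<Rightarrow> int"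
  where "coset_embed G H I r f x =
    (\<Sum>i\<in>I. if x \<in> H #>\<^bsub>G\<^esub> r i then f (i, x \<otimes>\<^bsub>G\<^esub> inv\<^bsub>G\<^esub> r i) else 0)"

definition semidirect_embed ::
    "('g, 'b) monoid_scheme \<Rightarrow> 'g set \<Rightarrow> 'i set \<Rightarrow> ('i \<Rightarrow> 'g)
      \<Rightarrow> ('i \<times> 'g \<Rightarrow> int) \<times> 'g \<Rightarrow> ('g \<Rightarrow> int) \<times> 'g"
  where "semidirect_embed G H I r = (\<lambda>(f, h). (coset_embed G H I r f, h))"

locale coset_transversal = group G + subgroup H G for G (structure) and H +
  fixes I :: "'i set" and r :: "'i \<Rightarrow> 'a"
  assumes finite_index: "finite I"
    and transversal_carrier: "r ` I \<subseteq> carrier G"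
    and transversal_inj: "inj_on (\<lambda>i. H #> r i) I"
begin

abbreviation "\<alpha> \<equiv> coset_embed G H I r"

lemma transversal_unique:
  assumes "i \<in> I" and "j \<in> I" and "x \<in> H #> r i" and "x \<in> H #> r j"
  shows "i = j"
proof -
  have "H #> r i = H #> x" and "H #> r j = H #> x"
    using assms transversal_carrier repr_independence [OF _ _ subgroup_axioms] by auto
  then show ?thesis
    using inj_onD [OF transversal_inj] assms(1,2) by metis
qed

lemma coset_embed_eval:
  assumes "i \<in> I" and "k \<in> H"
  shows "\<alpha> f (k \<otimes> r i) = f (i, k)"
proof -
  have ri: "r i \<in> carrier G" and k: "k \<in> carrier G"
    using assms transversal_carrier by auto
  have in_coset: "k \<otimes> r i \<in> H #> r i"
    using rcosI [OF assms(2) subset ri] .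
  have "\<alpha> f (k \<otimes> r i) = (\<Sum>j\<in>I. if j = i then f (i, k) else 0)"
    unfolding coset_embed_def
  proof (rule sum.cong [OF refl])
    fix j assume "j \<in> I"
    then show "(if k \<otimes> r i \<in> H #> r j then f (j, k \<otimes> r i \<otimes> inv r j) else 0)
             = (if j = i then f (i, k) else 0)"
      using transversal_unique [OF assms(1)] in_coset ri k by (auto simp: m_assoc)
  qed
  also have "\<dots> = f (i, k)"
    using assms(1) finite_index by simp
  finally show ?thesis .
qed

lemma coset_embed_outside_carrier:
  assumes "x \<notin> carrier G"
  shows "\<alpha> f x = 0"
proof -
  have "x \<notin> H #> r i" if "i \<in> I" for i
    using assms that transversal_carrier r_coset_subset_G [OF subset] by blast
  then show ?thesis
    by (simp add: coset_embed_def)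
qed

lemma finite_support_coset_embed:
  assumes "finite {q. f q \<noteq> 0}"
  shows "finite {x. \<alpha> f x \<noteq> 0}"
proof (rule finite_subset)
  show "{x. \<alpha> f x \<noteq> 0} \<subseteq> (\<lambda>(i, k). k \<otimes> r i) ` {q. f q \<noteq> 0}"
  proof
    fix x assume "x \<in> {x. \<alpha> f x \<noteq> 0}"
    then obtain i where i: "i \<in> I"
      and nz: "(if x \<in> H #> r i then f (i, x \<otimes> inv r i) else 0) \<noteq> 0"
      unfolding coset_embed_def by (auto elim: sum.not_neutral_contains_not_neutral)
    then have x: "x \<in> H #> r i" and fx: "f (i, x \<otimes> inv r i) \<noteq> 0"
      by (auto split: if_splits)
    have ri: "r i \<in> carrier G"
      using i transversal_carrier by blast
    then have "x \<in> carrier G"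
      using x r_coset_subset_G [OF subset] by blast
    then have "x = (x \<otimes> inv r i) \<otimes> r i"
      using inv_solve_right [of "x \<otimes> inv r i" x "r i"] ri by simp
    with fx show "x \<in> (\<lambda>(i, k). k \<otimes> r i) ` {q. f q \<noteq> 0}"
      by (auto intro!: image_eqI [where x = "(i, x \<otimes> inv r i)"])
  qed
qed (use assms in simp)

text \<open>The left-hand side is the first component of a product in \<open>M \<rtimes> H\<close>, the right-hand side
  that of the corresponding product in \<open>\<int>G \<rtimes> G\<close>: the map is additive and \<open>H\<close>-equivariant.\<close>

lemma coset_embed_mult:
  assumes h: "h \<in> H" and x: "x \<in> carrier G"
  shows "\<alpha> (\<lambda>(i, k). if i \<in> I \<and> k \<in> H then f (i, k) + f' (i, inv h \<otimes> k) else 0) x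
       = \<alpha> f x + \<alpha> f' (inv h \<otimes> x)"
  unfolding coset_embed_def sum.distrib [symmetric]
proof (rule sum.cong [OF refl])
  fix i assume i: "i \<in> I"
  have ri: "r i \<in> carrier G" and hG: "h \<in> carrier G"
    using i h transversal_carrier by auto
  have shift: "inv h \<otimes> x \<in> H #> r i \<longleftrightarrow> x \<in> H #> r i"
    using rcos_left_mult_iff [OF subgroup_axioms _ x ri] h by simp
  have assoc: "inv h \<otimes> x \<otimes> inv r i = inv h \<otimes> (x \<otimes> inv r i)"
    using hG x ri by (simp add: m_assoc)
  have "x \<in> H #> r i \<Longrightarrow> x \<otimes> inv r i \<in> H"
    using rcos_module_imp [OF is_group ri] by blast
  then show "(if x \<in> H #> r i then (\<lambda>(i, k). if i \<in> I \<and> k \<in> H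
                 then f (i, k) + f' (i, inv h \<otimes> k) else 0) (i, x \<otimes> inv r i) else 0)
           = (if x \<in> H #> r i then f (i, x \<otimes> inv r i) else 0)
             + (if inv h \<otimes> x \<in> H #> r i then f' (i, inv h \<otimes> x \<otimes> inv r i) else 0)"
    using shift assoc i by auto
qed

lemma semidirect_embed_hom:
  "semidirect_embed G H I r \<in> hom (free_semidirect G H I) (wreath_Z G)"
proof (rule homI)
  fix p assume "p \<in> carrier (free_semidirect G H I)"
  then show "semidirect_embed G H I r p \<in> carrier (wreath_Z G)"
    using finite_support_coset_embed coset_embed_outside_carrier
    by (auto simp: free_semidirect_def wreath_Z_def semidirect_embed_def)
next
  fix p q
  assume "p \<in> carrier (free_semidirect G H I)" and "q \<in> carrier (free_semidirect G H I)"
  then obtain f h f' h' where pq: "p = (f, h)" "q = (f', h')" and h: "h \<in> H"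
    by (cases p, cases q) (auto simp: free_semidirect_def)
  have "\<alpha> (\<lambda>(i, k). if i \<in> I \<and> k \<in> H then f (i, k) + f' (i, inv h \<otimes> k) else 0)
      = (\<lambda>x. if x \<in> carrier G then \<alpha> f x + \<alpha> f' (inv h \<otimes> x) else 0)"
    using coset_embed_mult [OF h] coset_embed_outside_carrier by fastforce
  then show "semidirect_embed G H I r (p \<otimes>\<^bsub>free_semidirect G H I\<^esub> q)
           = semidirect_embed G H I r p \<otimes>\<^bsub>wreath_Z G\<^esub> semidirect_embed G H I r q"
    by (simp add: pq free_semidirect_def wreath_Z_def semidirect_embed_def)
qed

lemma semidirect_embed_inj_on:
  "inj_on (semidirect_embed G H I r) (carrier (free_semidirect G H I))"
proof (rule inj_onI)
  fix p q
  assume p: "p \<in> carrier (free_semidirect G H I)" and q: "q \<in> carrier (free_semidirect G H I)"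
    and eq: "semidirect_embed G H I r p = semidirect_embed G H I r q"
  obtain f h f' h' where pq: "p = (f, h)" "q = (f', h')" by fastforce
  have "f (i, k) = f' (i, k)" for i k
  proof (cases "i \<in> I \<and> k \<in> H")
    case True
    then show ?thesis
      using eq coset_embed_eval [of i k f] coset_embed_eval [of i k f']
      by (simp add: pq semidirect_embed_def)
  next
    case False
    then show ?thesis
      using p q by (simp add: pq free_semidirect_def)
  qed
  then show "p = q"
    using eq by (auto simp: pq semidirect_embed_def)
qed

end

theorem lemma2:
  fixes G :: "('g, 'b) monoid_scheme" and H :: "'g set" and I :: "'i set" and m :: nat
  assumes "group G"
    and "subgroup H G"
    and "finite (rcosets\<^bsub>G\<^esub> H)" and "card (rcosets\<^bsub>G\<^esub> H) = m"
    and "finite I" and "card I \<le> m"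
  shows "\<exists>\<phi>. \<phi> \<in> hom (free_semidirect G H I) (wreath_Z G)
             \<and> inj_on \<phi> (carrier (free_semidirect G H I))"
proof -
  obtain r where "r ` I \<subseteq> carrier G" and "inj_on (\<lambda>i. H #>\<^bsub>G\<^esub> r i) I"
    using group.exists_coset_transversal [OF assms(1,3,5)] assms(4,6) by blast
  with assms interpret coset_transversal G H I r
    by (intro coset_transversal.intro coset_transversal_axioms.intro)
  show ?thesis
    using semidirect_embed_hom semidirect_embed_inj_on by blast
qed

end
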